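(* Consider the variational problem over $C^2$ families of positive definite matrices $\Sigma(s,t)\in\mathbb{R}^{n\times n}$ and matrices $A_s(s,t),A_t(s,t)\in\mathbb{R}^{n\times n}$, $(s,t)\in[0,1]^2$: $$\inf_{A_s,A_t,\Sigma}\int_0^1\int_0^1 J\,ds\,dt,\qquad J=J(\Sigma,A_s,A_t)=\sqrt{\mathrm{tr}(\Sigma A_s^{\mathsf{T}}A_s)\, \mathrm{tr}(\Sigma A_t^{\mathsf{T}} A_t)-\Big[\tfrac{1}{2}\mathrm{tr}\big(\Sigma(A_s^{\mathsf{T}}A_t+A_t^{\mathsf{T}}A_s)\big)\Big]^2},$$ subject to $\partial_s\Sigma=\Sigma A_s^{\mathsf{T}}+A_s\Sigma$, $\partial_t\Sigma=\Sigma A_t^{\mathsf{T}}+A_t\Sigma$, with $\Sigma(0,t),\Sigma(1,t),\Sigma(s,0),\Sigma(s,1)$ fixed. Let $S_s,S_t\colon[0,1]^2\to\mathbb{R}^{n\times n}$ be the Lagrange multipliers of the constraints for $\partial_s\Sigma$ and $\partial_t\Sigma$, respectively. Then $S_s=S_s^{\mathsf{T}}$, $S_t=S_t^{\mathsf{T}}$, and the critical-point system of the problem consists of $$J^{-1}\Big(A_s\, \mathrm{tr}(\Sigma A_t^{\mathsf{T}}A_t)-\tfrac{1}{2}A_t\, \mathrm{tr}(\Sigma (A_s^{\mathsf{T}}A_t+A_t^{\mathsf{T}}A_s))\Big)=2S_s,\qquad J^{-1}\Big(A_t\, \mathrm{tr}(\Sigma A_s^{\mathsf{T}}A_s)-\tfrac{1}{2}A_s\,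 \mathrm{tr}(\Sigma (A_s^{\mathsf{T}}A_t+A_t^{\mathsf{T}}A_s))\Big)=2S_t,$$ $$\partial_s S_s+\partial_t S_t+\tfrac{1}{2}J^{-1}\Big\{A_s^{\mathsf{T}}A_s\, \mathrm{tr}(\Sigma A_t^{\mathsf{T}}A_t)+A_t^{\mathsf{T}}A_t\,\mathrm{tr}(\Sigma A_s^{\mathsf{T}}A_s)-\tfrac{1}{2}(A_s^{\mathsf{T}}A_t+A_t^{\mathsf{T}}A_s)\,\mathrm{tr}(\Sigma (A_s^{\mathsf{T}}A_t+A_t^{\mathsf{T}}A_s))\Big\}=0,$$ $$\partial_s\Sigma=\Sigma A_s^{\mathsf{T}}+A_s\Sigma,\qquad \partial_t\Sigma=\Sigma A_t^{\mathsf{T}}+A_t\Sigma.$$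
   Context: The Lagrange multipliers enter through the Lagrangian $\int_0^1\int_0^1 J+\mathrm{tr}\big(S_s(\partial_s\Sigma-\Sigma A_s^{\mathsf{T}}-A_s\Sigma)\big)+\mathrm{tr}\big(S_t(\partial_t\Sigma-\Sigma A_t^{\mathsf{T}}-A_t\Sigma)\big)\,ds\,dt$; the critical-point system is obtained by setting the first variations with respect to $\Sigma,A_s,A_t,S_s,S_t$ to zero. *)

theory Defs
  imports "HOL-Analysis.Analysis"
begin

type_synonym 'n rmat = "real^'n^'n"
type_synonym 'n field2 = "real \<times> real \<Rightarrow> ('n::finite) rmat"

definition Q :: "(real \<times> real) set" where
  "Q = {0..1} \<times> {0..1}"

definition on_boundary :: "real \<times> real \<Rightarrow> bool" where
  "on_boundary p \<longleftrightarrow> fst p \<in> {0,1} \<or> snd p \<in> {0,1}"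

definition pd_s :: "(real \<times> real \<Rightarrow> 'a::real_normed_vector) \<Rightarrow> real \<times> real \<Rightarrow> 'a" where
  "pd_s F p = vector_derivative (\<lambda>s. F (s, snd p)) (at (fst p) within {0..1})"

definition pd_t :: "(real \<times> real \<Rightarrow> 'a::real_normed_vector) \<Rightarrow> real \<times> real \<Rightarrow> 'a" where
  "pd_t F p = vector_derivative (\<lambda>t. F (fst p, t)) (at (snd p) within {0..1})"

definition C1 :: "(real \<times> real \<Rightarrow> 'a::real_normed_vector) \<Rightarrow> bool" where
  "C1 F \<longleftrightarrow> continuous_on Q F
     \<and> (\<forall>p\<in>Q. (\<lambda>s. F (s, snd p)) differentiable (at (fst p) within {0..1})
              \<and> (\<lambda>t. F (fst p, t)) differentiable (at (snd p) within {0..1}))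
     \<and> continuous_on Q (pd_s F) \<and> continuous_on Q (pd_t F)"

definition C2 :: "(real \<times> real \<Rightarrow> 'a::real_normed_vector) \<Rightarrow> bool" where
  "C2 F \<longleftrightarrow> C1 F \<and> C1 (pd_s F) \<and> C1 (pd_t F)"

definition symmetric :: "('n::finite) rmat \<Rightarrow> bool" where
  "symmetric M \<longleftrightarrow> transpose M = M"

definition pos_def :: "('n::finite) rmat \<Rightarrow> bool" where
  "pos_def M \<longleftrightarrow> transpose M = M \<and> (\<forall>x. x \<noteq> 0 \<longrightarrow> x \<bullet> (M *v x) > 0)"

definition Jf :: "('n::finite) rmat \<Rightarrow> ('n::finite) rmat \<Rightarrow> ('n::finite) rmat \<Rightarrow> real" where
  "Jf S As At = sqrt (trace (S ** transpose As ** As) * trace (S ** transpose At ** At)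
      - ((1/2) * trace (S ** (transpose As ** At + transpose At ** As)))^2)"

definition Lag :: "('n::finite) field2 \<Rightarrow> ('n::finite) field2 \<Rightarrow> ('n::finite) field2 \<Rightarrow> ('n::finite) field2 \<Rightarrow> ('n::finite) field2 \<Rightarrow> real" where
  "Lag Sg As At Ss St = integral Q (\<lambda>p.
      Jf (Sg p) (As p) (At p)
      + trace (Ss p ** (pd_s Sg p - Sg p ** transpose (As p) - As p ** Sg p))
      + trace (St p ** (pd_t Sg p - Sg p ** transpose (At p) - At p ** Sg p)))"

text \<open>Admissible variations: Sigma-variations are C^2, symmetric-valued and vanish on the
  boundary (boundary values of Sigma fixed); A-variations are arbitrary C^2 fields;
  multiplier variations are arbitrary C^1 fields.\<close>
definition adm_Sigma_var :: "('n::finite) field2 \<Rightarrow> bool" where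
  "adm_Sigma_var D \<longleftrightarrow> C2 D \<and> (\<forall>p\<in>Q. symmetric (D p)) \<and> (\<forall>p\<in>Q. on_boundary p \<longrightarrow> D p = 0)"

definition critical :: "('n::finite) field2 \<Rightarrow> ('n::finite) field2 \<Rightarrow> ('n::finite) field2 \<Rightarrow> ('n::finite) field2 \<Rightarrow> ('n::finite) field2 \<Rightarrow> bool" where
  "critical Sg As At Ss St \<longleftrightarrow>
     (\<forall>D. adm_Sigma_var D \<longrightarrow>
        ((\<lambda>e. Lag (\<lambda>p. Sg p + e *\<^sub>R D p) As At Ss St) has_real_derivative 0) (at 0))
   \<and> (\<forall>D. C2 D \<longrightarrow>
        ((\<lambda>e. Lag Sg (\<lambda>p. As p + e *\<^sub>R D p) At Ss St) has_real_derivative 0) (at 0))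
   \<and> (\<forall>D. C2 D \<longrightarrow>
        ((\<lambda>e. Lag Sg As (\<lambda>p. At p + e *\<^sub>R D p) Ss St) has_real_derivative 0) (at 0))
   \<and> (\<forall>D. C1 D \<longrightarrow>
        ((\<lambda>e. Lag Sg As At (\<lambda>p. Ss p + e *\<^sub>R D p) St) has_real_derivative 0) (at 0))
   \<and> (\<forall>D. C1 D \<longrightarrow>
        ((\<lambda>e. Lag Sg As At Ss (\<lambda>p. St p + e *\<^sub>R D p)) has_real_derivative 0) (at 0))"

definition cp_system :: "('n::finite) field2 \<Rightarrow> ('n::finite) field2 \<Rightarrow> ('n::finite) field2 \<Rightarrow> ('n::finite) field2 \<Rightarrow> ('n::finite) field2 \<Rightarrow> bool" where
  "cp_system Sg As At Ss St \<longleftrightarrow> (\<forall>p\<in>Q.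
     let S = Sg p; a = As p; b = At p; J = Jf S a b;
         Taa = trace (S ** transpose a ** a); Tbb = trace (S ** transpose b ** b);
         M = transpose a ** b + transpose b ** a; Tab = trace (S ** M)
     in (inverse J *\<^sub>R (Tbb *\<^sub>R a - ((1/2) * Tab) *\<^sub>R b) = 2 *\<^sub>R Ss p)
      \<and> (inverse J *\<^sub>R (Taa *\<^sub>R b - ((1/2) * Tab) *\<^sub>R a) = 2 *\<^sub>R St p)
      \<and> (pd_s Ss p + pd_t St p + ((1/2) * inverse J) *\<^sub>R
           (Tbb *\<^sub>R (transpose a ** a) + Taa *\<^sub>R (transpose b ** b) - ((1/2) * Tab) *\<^sub>R M) = 0)
      \<and> pd_s Sg p = S ** transpose a + a ** S
      \<and> pd_t Sg p = S ** transpose b + b ** S)"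

definition symm_part :: "('n::finite) field2 \<Rightarrow> ('n::finite) field2" where
  "symm_part F = (\<lambda>p. (1/2) *\<^sub>R (F p + transpose (F p)))"

end

(* The first claim holds because pairing a multiplier with a symmetric matrix only sees its
   symmetric part, and the constraint residuals d_s Sigma - Sigma A_s^T - A_s Sigma and
   d_t Sigma - Sigma A_t^T - A_t Sigma are symmetric whenever Sigma is.

   For the critical-point system, every first variation of the Lagrangian is computed by
   differentiating under the integral sign (J is smooth where it is positive, and positivity
   persists on a strip around the unperturbed fields) and, for Sigma-variations, by integrating
   the multiplier terms by parts, the variations vanishing on the boundary.  Each variation then
   reads int tr(R D) for a continuous residual R, and testing with polynomial fields
   (Stone-Weierstrass) shows that it vanishes for all admissible D iff R = 0, or R + R^T = 0 for
   the symmetric Sigma-variations.  Positive definiteness of Sigma cancels the factor Sigma in the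
   A-residuals, and substituting the two resulting multiplier equations into the Sigma-residual
   turns A_s^T S_s + S_s A_s + A_t^T S_t + S_t A_t into twice dJ/dSigma, which yields the
   remaining equation. *)

theory Submission
  imports Defs
begin

lemma bounded_bilinear_matrix_mult:
  "bounded_bilinear (\<lambda>(A::real^'n^'m) (B::real^'p^'n). A ** B)"
proof -
  have "((A::real^'n^'m) + B) ** (C::real^'p^'n) = A ** C + B ** C" for A B C
    by (simp add: matrix_matrix_mult_def vec_eq_iff sum.distrib distrib_right)
  then show ?thesis
    unfolding bilinear_conv_bounded_bilinear[symmetric] bilinear_def linear_iff
    by (simp add: matrix_add_ldistrib scalar_matrix_assoc matrix_scalar_ac)
qed

lemma bounded_linear_trace: "bounded_linear (trace :: real^'n^'n \<Rightarrow> real)"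
  unfolding linear_conv_bounded_linear[symmetric] linear_iff
  by (simp add: trace_def sum_distrib_left sum.distrib)

lemma bounded_linear_transpose: "bounded_linear (transpose :: real^'n^'m \<Rightarrow> real^'m^'n)"
  unfolding linear_conv_bounded_linear[symmetric] linear_iff
  by (simp add: transpose_def vec_eq_iff)

lemmas matrix_mult_simps =
  bounded_bilinear.add_left[OF bounded_bilinear_matrix_mult]
  bounded_bilinear.add_right[OF bounded_bilinear_matrix_mult]
  bounded_bilinear.diff_left[OF bounded_bilinear_matrix_mult]
  bounded_bilinear.diff_right[OF bounded_bilinear_matrix_mult]
  bounded_bilinear.minus_left[OF bounded_bilinear_matrix_mult]
  bounded_bilinear.minus_right[OF bounded_bilinear_matrix_mult]
  bounded_bilinear.zero_left[OF bounded_bilinear_matrix_mult]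
  bounded_bilinear.zero_right[OF bounded_bilinear_matrix_mult]
  bounded_bilinear.scaleR_left[OF bounded_bilinear_matrix_mult]
  bounded_bilinear.scaleR_right[OF bounded_bilinear_matrix_mult]

lemmas trace_simps = linear_simps[OF bounded_linear_trace]
lemmas transpose_simps = linear_simps[OF bounded_linear_transpose]

lemma continuous_on_matrix_mult [continuous_intros]:
  "continuous_on S f \<Longrightarrow> continuous_on S g \<Longrightarrow>
   continuous_on S (\<lambda>x. (f x::real^'n^'m) ** (g x::real^'p^'n))"
  by (rule bounded_bilinear.continuous_on[OF bounded_bilinear_matrix_mult])

lemma continuous_on_trace [continuous_intros]:
  "continuous_on S f \<Longrightarrow> continuous_on S (\<lambda>x. trace (f x::real^'n^'n))"
  by (rule bounded_linear.continuous_on[OF bounded_linear_trace])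

lemma continuous_on_transpose [continuous_intros]:
  "continuous_on S f \<Longrightarrow> continuous_on S (\<lambda>x. transpose (f x::real^'n^'m))"
  by (rule bounded_linear.continuous_on[OF bounded_linear_transpose])

lemma has_vector_derivative_matrix_mult:
  "(f has_vector_derivative f') (at x within S) \<Longrightarrow> (g has_vector_derivative g') (at x within S) \<Longrightarrow>
   ((\<lambda>x. (f x::real^'n^'m) ** (g x::real^'p^'n)) has_vector_derivative f' ** g x + f x ** g')
     (at x within S)"
  using bounded_bilinear.has_vector_derivative[OF bounded_bilinear_matrix_mult]
  by (simp add: add.commute)

lemma has_vector_derivative_trace:
  "(f has_vector_derivative f') F \<Longrightarrow>
   ((\<lambda>x. trace (f x::real^'n^'n)) has_vector_derivative trace f') F"
  by (rule bounded_linear.has_vector_derivative[OF bounded_linear_trace])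

lemma has_vector_derivative_transpose:
  "(f has_vector_derivative f') F \<Longrightarrow>
   ((\<lambda>x. transpose (f x::real^'n^'m)) has_vector_derivative transpose f') F"
  by (rule bounded_linear.has_vector_derivative[OF bounded_linear_transpose])

lemma transpose_eq_0_iff: "transpose (X::real^'n^'m) = 0 \<longleftrightarrow> X = 0"
proof
  assume "transpose X = 0"
  then have "transpose (transpose X) = transpose 0" by simp
  then show "X = 0" by (simp add: transpose_simps)
qed (simp add: transpose_simps)

lemma trace_transpose: "trace (transpose (A::real^'n^'n)) = trace A"
  by (simp add: trace_def transpose_def)

lemma trace_mult_rotate: "trace ((A::real^'n^'n) ** B ** C) = trace (B ** C ** A)"
  by (metis matrix_mul_assoc trace_mul_sym)

lemma trace_mult_transpose: "trace ((A::real^'n^'n) ** transpose B) = trace (transpose A ** B)"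
  by (metis matrix_transpose_mul trace_mul_sym trace_transpose transpose_transpose)

lemma trace_transpose_mult_symmetric:
  "transpose X = X \<Longrightarrow> trace (transpose (A::real^'n^'n) ** X) = trace (A ** X)"
  by (metis trace_mult_transpose)

lemma trace_skew_mult_symmetric:
  fixes R D :: "real^'n^'n"
  assumes "R + transpose R = 0" and "transpose D = D"
  shows "trace (R ** D) = 0"
proof -
  have "transpose R = - R" using assms(1) by (simp add: eq_neg_iff_add_eq_0 add.commute)
  then have "trace (R ** D) = - trace (R ** D)"
    using trace_transpose_mult_symmetric[OF assms(2), of R] by (simp add: matrix_mult_simps trace_simps)
  then show ?thesis by simp
qed

lemma trace_symm_part_mult:
  "transpose X = X \<Longrightarrow> trace ((1/2) *\<^sub>R (A + transpose A) ** (X::real^'n^'n)) = trace (A ** X)"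
  using trace_transpose_mult_symmetric[of X A] by (simp add: matrix_mult_simps trace_simps)

lemma pos_def_matrix_mult_eq_0:
  assumes "pos_def S" and "(S::real^'n^'n) ** Y = 0"
  shows "Y = 0"
proof -
  have "Y *v x = 0" for x
  proof (rule ccontr)
    assume "Y *v x \<noteq> 0"
    moreover have "S *v (Y *v x) = 0" using assms(2) by (metis matrix_vector_mul_assoc matrix_vector_mult_0)
    ultimately show False using assms(1) unfolding pos_def_def by (metis inner_zero_right less_irrefl)
  qed
  then show ?thesis by (simp add: matrix_eq)
qed

lemma Q_eq_cbox: "Q = cbox (0,0) (1,1)"
  by (simp add: Q_def cbox_Pair_eq)

lemma compact_Q: "compact Q"
  by (simp add: Q_eq_cbox)

lemma mem_Q_iff: "p \<in> Q \<longleftrightarrow> fst p \<in> {0..1} \<and> snd p \<in> {0..1}"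
  by (cases p) (simp add: Q_def)

lemma integrable_on_Q: "continuous_on Q (f::real \<times> real \<Rightarrow> 'a::banach) \<Longrightarrow> f integrable_on Q"
  unfolding Q_eq_cbox by (rule integrable_continuous)

lemma C1_D:
  assumes "C1 F"
  shows "continuous_on Q F" "continuous_on Q (pd_s F)" "continuous_on Q (pd_t F)"
  using assms by (auto simp: C1_def)

lemma C2_imp_C1: "C2 F \<Longrightarrow> C1 F"
  by (simp add: C2_def)

lemma has_vector_derivative_pd_s:
  assumes "C1 F" and "p \<in> Q"
  shows "((\<lambda>s. F (s, snd p)) has_vector_derivative pd_s F p) (at (fst p) within {0..1})"
  using assms unfolding C1_def pd_s_def by (simp add: vector_derivative_works[symmetric])

lemma has_vector_derivative_pd_t:
  assumes "C1 F" and "p \<in> Q"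
  shows "((\<lambda>t. F (fst p, t)) has_vector_derivative pd_t F p) (at (snd p) within {0..1})"
  using assms unfolding C1_def pd_t_def by (simp add: vector_derivative_works[symmetric])

lemma pd_s_eqI:
  assumes "p \<in> Q" and "((\<lambda>s. F (s, snd p)) has_vector_derivative X) (at (fst p) within {0..1})"
  shows "pd_s F p = X"
  using assms vector_derivative_within_cbox[of 0 1 "fst p"]
  by (simp add: pd_s_def mem_Q_iff)

lemma pd_t_eqI:
  assumes "p \<in> Q" and "((\<lambda>t. F (fst p, t)) has_vector_derivative X) (at (snd p) within {0..1})"
  shows "pd_t F p = X"
  using assms vector_derivative_within_cbox[of 0 1 "snd p"]
  by (simp add: pd_t_def mem_Q_iff)

lemma C1_cong:
  assumes F: "C1 F" and eq: "\<And>p. p \<in> Q \<Longrightarrow> F p = G p"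
  shows "C1 G"
proof -
  have ds: "((\<lambda>s. G (s, snd p)) has_vector_derivative pd_s F p) (at (fst p) within {0..1})"
    if "p \<in> Q" for p
    by (rule has_vector_derivative_transform[OF _ _ has_vector_derivative_pd_s[OF F that]])
       (use that eq in \<open>auto simp: mem_Q_iff\<close>)
  have dt: "((\<lambda>t. G (fst p, t)) has_vector_derivative pd_t F p) (at (snd p) within {0..1})"
    if "p \<in> Q" for p
    by (rule has_vector_derivative_transform[OF _ _ has_vector_derivative_pd_t[OF F that]])
       (use that eq in \<open>auto simp: mem_Q_iff\<close>)
  have "continuous_on Q G" "continuous_on Q (pd_s G)" "continuous_on Q (pd_t G)"
    using C1_D[OF F] eq pd_s_eqI[OF _ ds] pd_t_eqI[OF _ dt]
    by (auto intro: continuous_on_eq)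
  moreover have "\<forall>p\<in>Q. (\<lambda>s. G (s, snd p)) differentiable (at (fst p) within {0..1})
      \<and> (\<lambda>t. G (fst p, t)) differentiable (at (snd p) within {0..1})"
    using ds dt unfolding differentiable_def has_vector_derivative_def by blast
  ultimately show ?thesis unfolding C1_def by blast
qed

lemma pd_s_add_scaleR:
  assumes "C1 F" "C1 D" "p \<in> Q"
  shows "pd_s (\<lambda>p. F p + e *\<^sub>R D p) p = pd_s F p + e *\<^sub>R pd_s D p"
  using assms by (intro pd_s_eqI)
    (auto intro!: has_vector_derivative_pd_s derivative_eq_intros)

lemma pd_t_add_scaleR:
  assumes "C1 F" "C1 D" "p \<in> Q"
  shows "pd_t (\<lambda>p. F p + e *\<^sub>R D p) p = pd_t F p + e *\<^sub>R pd_t D p"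
  using assms by (intro pd_t_eqI)
    (auto intro!: has_vector_derivative_pd_t derivative_eq_intros)

lemma transpose_pd_s:
  fixes F :: "real \<times> real \<Rightarrow> real^'n^'n"
  assumes F: "C1 F" and sym: "\<And>p. p \<in> Q \<Longrightarrow> transpose (F p) = F p" and p: "p \<in> Q"
  shows "transpose (pd_s F p) = pd_s F p"
proof -
  have "((\<lambda>s. transpose (F (s, snd p))) has_vector_derivative transpose (pd_s F p))
      (at (fst p) within {0..1})"
    by (rule has_vector_derivative_transpose[OF has_vector_derivative_pd_s[OF F p]])
  then have "((\<lambda>s. F (s, snd p)) has_vector_derivative transpose (pd_s F p)) (at (fst p) within {0..1})"
    by (rule has_vector_derivative_transform[rotated 2]) (use p sym in \<open>auto simp: mem_Q_iff\<close>)
  then show ?thesis using pd_s_eqI[OF p] by metis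
qed

lemma transpose_pd_t:
  fixes F :: "real \<times> real \<Rightarrow> real^'n^'n"
  assumes F: "C1 F" and sym: "\<And>p. p \<in> Q \<Longrightarrow> transpose (F p) = F p" and p: "p \<in> Q"
  shows "transpose (pd_t F p) = pd_t F p"
proof -
  have "((\<lambda>t. transpose (F (fst p, t))) has_vector_derivative transpose (pd_t F p))
      (at (snd p) within {0..1})"
    by (rule has_vector_derivative_transpose[OF has_vector_derivative_pd_t[OF F p]])
  then have "((\<lambda>t. F (fst p, t)) has_vector_derivative transpose (pd_t F p)) (at (snd p) within {0..1})"
    by (rule has_vector_derivative_transform[rotated 2]) (use p sym in \<open>auto simp: mem_Q_iff\<close>)
  then show ?thesis using pd_t_eqI[OF p] by metis
qed

section \<open>The fundamental lemma of the calculus of variations\<close>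

lemma real_polynomial_function_partials:
  fixes \<phi> :: "real \<times> real \<Rightarrow> real"
  assumes "real_polynomial_function \<phi>"
  obtains \<phi>s \<phi>t where "real_polynomial_function \<phi>s" "real_polynomial_function \<phi>t"
    "\<And>p. ((\<lambda>s. \<phi> (s, snd p)) has_real_derivative \<phi>s p) (at (fst p))"
    "\<And>p. ((\<lambda>t. \<phi> (fst p, t)) has_real_derivative \<phi>t p) (at (snd p))"
proof -
  have "\<exists>\<phi>s \<phi>t. real_polynomial_function \<phi>s \<and> real_polynomial_function \<phi>t
     \<and> (\<forall>p. ((\<lambda>s. \<phi> (s, snd p)) has_real_derivative \<phi>s p) (at (fst p)))
     \<and> (\<forall>p. ((\<lambda>t. \<phi> (fst p, t)) has_real_derivative \<phi>t p) (at (snd p)))"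
    using assms
  proof (induct \<phi>)
    case (linear f)
    have lin: "linear f" using linear.hyps by (rule bounded_linear.linear)
    have "f (1, 0) * s + f (0, y) = f (s, y)" "f (0, 1) * s + f (y, 0) = f (y, s)" for s y
      using linear_add[OF lin, of "s *\<^sub>R (1, 0)" "(0, y)"] linear_scale[OF lin, of s "(1, 0)"]
        linear_add[OF lin, of "s *\<^sub>R (0, 1)" "(y, 0)"] linear_scale[OF lin, of s "(0, 1)"]
      by (simp_all add: mult.commute)
    then have "(\<lambda>s. f (s, y)) = (\<lambda>s. f (1, 0) * s + f (0, y))"
      "(\<lambda>t. f (y, t)) = (\<lambda>t. f (0, 1) * t + f (y, 0))" for y
      by simp_all
    then have "((\<lambda>s. f (s, y)) has_real_derivative f (1, 0)) (at x)"
      "((\<lambda>t. f (y, t)) has_real_derivative f (0, 1)) (at x)" for x y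
      by (auto intro!: derivative_eq_intros)
    then show ?case
      by (intro exI[of _ "\<lambda>_. f (1, 0)"] exI[of _ "\<lambda>_. f (0, 1)"]) auto
  next
    case (const c)
    show ?case by (intro exI[of _ "\<lambda>_. 0"]) auto
  next
    case (add f1 f2)
    then obtain p1 q1 p2 q2 where "real_polynomial_function p1" "real_polynomial_function q1"
      "real_polynomial_function p2" "real_polynomial_function q2"
      "\<And>p. ((\<lambda>s. f1 (s, snd p)) has_real_derivative p1 p) (at (fst p))"
      "\<And>p. ((\<lambda>t. f1 (fst p, t)) has_real_derivative q1 p) (at (snd p))"
      "\<And>p. ((\<lambda>s. f2 (s, snd p)) has_real_derivative p2 p) (at (fst p))"
      "\<And>p. ((\<lambda>t. f2 (fst p, t)) has_real_derivative q2 p) (at (snd p))"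
      by blast
    then show ?case
      by (intro exI[of _ "\<lambda>p. p1 p + p2 p"] exI[of _ "\<lambda>p. q1 p + q2 p"] conjI allI)
        (auto intro!: DERIV_add)
  next
    case (mult f1 f2)
    then obtain p1 q1 p2 q2 where "real_polynomial_function p1" "real_polynomial_function q1"
      "real_polynomial_function p2" "real_polynomial_function q2"
      "\<And>p. ((\<lambda>s. f1 (s, snd p)) has_real_derivative p1 p) (at (fst p))"
      "\<And>p. ((\<lambda>t. f1 (fst p, t)) has_real_derivative q1 p) (at (snd p))"
      "\<And>p. ((\<lambda>s. f2 (s, snd p)) has_real_derivative p2 p) (at (fst p))"
      "\<And>p. ((\<lambda>t. f2 (fst p, t)) has_real_derivative q2 p) (at (snd p))"
      by blast
    with mult.hyps(1,3) show ?case
      by (intro exI[of _ "\<lambda>p. p1 p * f2 p + f1 p * p2 p"] exI[of _ "\<lambda>p. q1 p * f2 p + f1 p * q2 p"] conjI allI)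
        (auto intro!: derivative_eq_intros)
  qed
  then show ?thesis using that by blast
qed

lemma continuous_on_real_polynomial_function:
  "real_polynomial_function (\<phi> :: real \<times> real \<Rightarrow> real) \<Longrightarrow> continuous_on S \<phi>"
  by (simp add: continuous_on_polymonial_function real_polynomial_function_eq)

lemma polynomial_scaleR_partials:
  fixes \<phi> :: "real \<times> real \<Rightarrow> real" and E :: "'a::real_normed_vector"
  assumes "real_polynomial_function \<phi>"
  obtains \<phi>s \<phi>t where "real_polynomial_function \<phi>s" "real_polynomial_function \<phi>t"
    "\<And>p. p \<in> Q \<Longrightarrow> pd_s (\<lambda>p. \<phi> p *\<^sub>R E) p = \<phi>s p *\<^sub>R E"
    "\<And>p. p \<in> Q \<Longrightarrow> pd_t (\<lambda>p. \<phi> p *\<^sub>R E) p = \<phi>t p *\<^sub>R E"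
    "\<And>p. ((\<lambda>s. \<phi> (s, snd p) *\<^sub>R E) has_vector_derivative \<phi>s p *\<^sub>R E) (at (fst p) within {0..1})"
    "\<And>p. ((\<lambda>t. \<phi> (fst p, t) *\<^sub>R E) has_vector_derivative \<phi>t p *\<^sub>R E) (at (snd p) within {0..1})"
proof -
  obtain \<phi>s \<phi>t where ps: "real_polynomial_function \<phi>s" and pt: "real_polynomial_function \<phi>t"
    and ds: "\<And>p. ((\<lambda>s. \<phi> (s, snd p)) has_real_derivative \<phi>s p) (at (fst p))"
    and dt: "\<And>p. ((\<lambda>t. \<phi> (fst p, t)) has_real_derivative \<phi>t p) (at (snd p))"
    using real_polynomial_function_partials[OF assms] by blast
  have vs: "((\<lambda>s. \<phi> (s, snd p) *\<^sub>R E) has_vector_derivative \<phi>s p *\<^sub>R E) (at (fst p) within {0..1})" for p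
    by (rule has_vector_derivative_at_within)
      (use has_vector_derivative_scaleR[OF ds[of p] has_vector_derivative_const[of E]] in simp)
  have vt: "((\<lambda>t. \<phi> (fst p, t) *\<^sub>R E) has_vector_derivative \<phi>t p *\<^sub>R E) (at (snd p) within {0..1})" for p
    by (rule has_vector_derivative_at_within)
      (use has_vector_derivative_scaleR[OF dt[of p] has_vector_derivative_const[of E]] in simp)
  show ?thesis
    by (rule that[OF ps pt pd_s_eqI[OF _ vs] pd_t_eqI[OF _ vt] vs vt])
qed

lemma C1_polynomial_scaleR:
  fixes \<phi> :: "real \<times> real \<Rightarrow> real" and E :: "'a::real_normed_vector"
  assumes "real_polynomial_function \<phi>"
  shows "C1 (\<lambda>p. \<phi> p *\<^sub>R E)"
proof -
  obtain \<phi>s \<phi>t where ps: "real_polynomial_function \<phi>s" and pt: "real_polynomial_function \<phi>t"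
    and es: "\<And>p. p \<in> Q \<Longrightarrow> pd_s (\<lambda>p. \<phi> p *\<^sub>R E) p = \<phi>s p *\<^sub>R E"
    and et: "\<And>p. p \<in> Q \<Longrightarrow> pd_t (\<lambda>p. \<phi> p *\<^sub>R E) p = \<phi>t p *\<^sub>R E"
    and vs: "\<And>p. ((\<lambda>s. \<phi> (s, snd p) *\<^sub>R E) has_vector_derivative \<phi>s p *\<^sub>R E) (at (fst p) within {0..1})"
    and vt: "\<And>p. ((\<lambda>t. \<phi> (fst p, t) *\<^sub>R E) has_vector_derivative \<phi>t p *\<^sub>R E) (at (snd p) within {0..1})"
    by (rule polynomial_scaleR_partials[OF assms, where E = E]) (rule that)
  have cont: "continuous_on Q (\<lambda>p. f p *\<^sub>R E)" if "real_polynomial_function f" for f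
    by (intro continuous_intros continuous_on_real_polynomial_function that)
  have "continuous_on Q (pd_s (\<lambda>p. \<phi> p *\<^sub>R E))"
    using cont[OF ps] by (rule continuous_on_eq) (simp add: es)
  moreover have "continuous_on Q (pd_t (\<lambda>p. \<phi> p *\<^sub>R E))"
    using cont[OF pt] by (rule continuous_on_eq) (simp add: et)
  moreover have "\<forall>p\<in>Q. (\<lambda>s. \<phi> (s, snd p) *\<^sub>R E) differentiable (at (fst p) within {0..1})
      \<and> (\<lambda>t. \<phi> (fst p, t) *\<^sub>R E) differentiable (at (snd p) within {0..1})"
    using vs vt unfolding differentiable_def has_vector_derivative_def by blast
  ultimately show ?thesis using cont[OF assms] unfolding C1_def by blast
qed

lemma C2_polynomial_scaleR:
  fixes \<phi> :: "real \<times> real \<Rightarrow> real" and E :: "'a::real_normed_vector"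
  assumes "real_polynomial_function \<phi>"
  shows "C2 (\<lambda>p. \<phi> p *\<^sub>R E)"
proof -
  obtain \<phi>s \<phi>t where ps: "real_polynomial_function \<phi>s" and pt: "real_polynomial_function \<phi>t"
    and es: "\<And>p. p \<in> Q \<Longrightarrow> pd_s (\<lambda>p. \<phi> p *\<^sub>R E) p = \<phi>s p *\<^sub>R E"
    and et: "\<And>p. p \<in> Q \<Longrightarrow> pd_t (\<lambda>p. \<phi> p *\<^sub>R E) p = \<phi>t p *\<^sub>R E"
    by (rule polynomial_scaleR_partials[OF assms, where E = E]) (rule that)
  have "C1 (pd_s (\<lambda>p. \<phi> p *\<^sub>R E))"
    by (rule C1_cong[OF C1_polynomial_scaleR[OF ps, where E = E]]) (simp add: es)
  moreover have "C1 (pd_t (\<lambda>p. \<phi> p *\<^sub>R E))"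
    by (rule C1_cong[OF C1_polynomial_scaleR[OF pt, where E = E]]) (simp add: et)
  ultimately show ?thesis using C1_polynomial_scaleR[OF assms] unfolding C2_def by blast
qed

lemma continuous_orthogonal_polynomials_eq_0:
  fixes r :: "real \<times> real \<Rightarrow> real"
  assumes cont: "continuous_on Q r"
    and orth: "\<And>\<phi>. real_polynomial_function \<phi> \<Longrightarrow> integral Q (\<lambda>p. \<phi> p * r p) = 0"
  shows "\<forall>p\<in>Q. r p = 0"
proof -
  \<comment> \<open>\<open>\<integral>r\<^sup>2 = \<integral>(r - g) r \<le> e \<integral>\<bar>r\<bar>\<close> for a polynomial \<open>g\<close> uniformly \<open>e\<close>-close to \<open>r\<close>\<close>
  define I where "I = integral Q (\<lambda>p. r p * r p)"
  define B where "B = integral Q (\<lambda>p. \<bar>r p\<bar>)"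
  have int_sq: "(\<lambda>p. r p * r p) integrable_on Q" and int_abs: "(\<lambda>p. \<bar>r p\<bar>) integrable_on Q"
    using cont by (auto intro!: integrable_on_Q continuous_on_mult continuous_on_rabs)
  have "B \<ge> 0" unfolding B_def by (rule integral_nonneg[OF int_abs]) auto
  have I_le: "I \<le> e * B" if "e > 0" for e
  proof -
    obtain g where g: "real_polynomial_function g" and close: "\<And>p. p \<in> Q \<Longrightarrow> \<bar>r p - g p\<bar> < e"
      using Stone_Weierstrass_real_polynomial_function[OF compact_Q cont \<open>e > 0\<close>] by blast
    have int_g: "(\<lambda>p. g p * r p) integrable_on Q"
      using cont continuous_on_real_polynomial_function[OF g] by (auto intro!: integrable_on_Q continuous_on_mult)
    have "I = integral Q (\<lambda>p. r p * r p - g p * r p)"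
      using integral_diff[OF int_sq int_g] orth[OF g] by (simp add: I_def)
    also have "\<dots> \<le> integral Q (\<lambda>p. e * \<bar>r p\<bar>)"
    proof (rule integral_le)
      show "(\<lambda>p. r p * r p - g p * r p) integrable_on Q" using int_sq int_g by (rule integrable_diff)
      show "(\<lambda>p. e * \<bar>r p\<bar>) integrable_on Q" using integrable_cmul[OF int_abs, of e] by simp
      fix p assume "p \<in> Q"
      have "r p * r p - g p * r p \<le> \<bar>r p - g p\<bar> * \<bar>r p\<bar>"
        by (metis abs_ge_self abs_mult left_diff_distrib)
      also have "\<dots> \<le> e * \<bar>r p\<bar>" using close[OF \<open>p \<in> Q\<close>] by (simp add: mult_right_mono)
      finally show "r p * r p - g p * r p \<le> e * \<bar>r p\<bar>" .
    qed
    finally show ?thesis by (simp add: B_def)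
  qed
  have "I \<le> 0"
  proof (rule field_le_epsilon)
    fix e :: real assume "e > 0"
    have "I \<le> e / (B + 1) * B" using I_le[of "e / (B + 1)"] \<open>B \<ge> 0\<close> \<open>e > 0\<close> by simp
    also have "\<dots> \<le> e" using \<open>B \<ge> 0\<close> \<open>e > 0\<close> by (simp add: field_simps)
    finally show "I \<le> 0 + e" by simp
  qed
  moreover have "I \<ge> 0" unfolding I_def by (rule integral_nonneg[OF int_sq]) simp
  ultimately have zero_integral: "((\<lambda>p. r p * r p) has_integral 0) (cbox (0, 0) (1, 1))"
    using int_sq by (simp add: I_def Q_eq_cbox has_integral_integral)
  have "r p * r p = 0" if "p \<in> Q" for p
    by (rule has_integral_0_cbox_imp_0[OF _ _ zero_integral])
      (use cont that in \<open>auto simp: Q_eq_cbox box_ne_empty Basis_prod_def intro!: continuous_on_mult\<close>)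
  then show ?thesis by simp
qed

lemma trace_mult_axis: "trace ((R::real^'n^'n) ** axis i (axis j 1)) = R $ j $ i"
proof -
  have "R $ k $ m * axis i (axis j 1) $ m $ k = (if m = i then if k = j then R $ k $ i else 0 else 0)"
    for k m by (simp add: axis_def)
  then have "(R ** axis i (axis j 1)) $ k $ k = (if k = j then R $ k $ i else 0)" for k
    by (simp add: matrix_matrix_mult_def)
  then show ?thesis by (simp add: trace_def)
qed

lemma continuous_matrix_orthogonal_polynomials_eq_0:
  fixes R :: "real \<times> real \<Rightarrow> real^'n^'n"
  assumes cont: "continuous_on Q R"
    and orth: "\<And>\<phi> E. real_polynomial_function \<phi> \<Longrightarrow> integral Q (\<lambda>p. trace (R p ** (\<phi> p *\<^sub>R E))) = 0"
  shows "\<forall>p\<in>Q. R p = 0"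
proof -
  have "\<forall>p\<in>Q. R p $ j $ i = 0" for i j
  proof (rule continuous_orthogonal_polynomials_eq_0)
    show "continuous_on Q (\<lambda>p. R p $ j $ i)"
      by (intro continuous_intros continuous_on_component cont)
    fix \<phi> :: "real \<times> real \<Rightarrow> real"
    assume "real_polynomial_function \<phi>"
    from orth[OF this, of "axis i (axis j 1)"] show "integral Q (\<lambda>p. \<phi> p * R p $ j $ i) = 0"
      by (simp add: matrix_mult_simps trace_simps trace_mult_axis)
  qed
  then show ?thesis by (simp add: vec_eq_iff)
qed

definition square_bump :: "real \<times> real \<Rightarrow> real" where
  "square_bump p = fst p * (1 - fst p) * (snd p * (1 - snd p))"

lemma real_polynomial_function_square_bump: "real_polynomial_function square_bump"
  unfolding square_bump_def
  by (intro real_polynomial_function.intros real_polynomial_function_diff bounded_linear_fst bounded_linear_snd)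

lemma square_bump_on_boundary: "on_boundary p \<Longrightarrow> square_bump p = 0"
  by (auto simp: square_bump_def on_boundary_def)

lemma square_bump_pos: "p \<in> {0<..<1} \<times> {0<..<1} \<Longrightarrow> square_bump p > 0"
  by (auto simp: square_bump_def)

lemma Q_eq_closure_open_square: "Q = closure ({0<..<1} \<times> {0<..<1})"
  by (simp add: Q_def closure_Times)

text \<open>Admissible \<open>\<Sigma>\<close>-variations are symmetric and vanish on the boundary, so the available test
  fields are \<open>square_bump \<phi> (E + E\<^sup>T)\<close>: they detect only the symmetric part of a residual, and
  only in the interior of the square; continuity recovers the boundary.\<close>

lemma continuous_matrix_orthogonal_symmetric_eq_0:
  fixes R :: "real \<times> real \<Rightarrow> real^'n^'n"
  assumes cont: "continuous_on Q R"
    and orth: "\<And>\<phi> E. real_polynomial_function \<phi> \<Longrightarrow>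
      integral Q (\<lambda>p. trace (R p ** ((square_bump p * \<phi> p) *\<^sub>R (E + transpose E)))) = 0"
  shows "\<forall>p\<in>Q. R p + transpose (R p) = 0"
proof -
  have "\<forall>p\<in>Q. square_bump p *\<^sub>R (R p + transpose (R p)) = 0"
  proof (rule continuous_matrix_orthogonal_polynomials_eq_0)
    show "continuous_on Q (\<lambda>p. square_bump p *\<^sub>R (R p + transpose (R p)))"
      unfolding square_bump_def by (intro continuous_intros cont)
    fix \<phi> :: "real \<times> real \<Rightarrow> real" and E :: "real^'n^'n"
    assume "real_polynomial_function \<phi>"
    moreover have "trace ((square_bump p *\<^sub>R (R p + transpose (R p))) ** (\<phi> p *\<^sub>R E))
        = trace (R p ** ((square_bump p * \<phi> p) *\<^sub>R (E + transpose E)))" for p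
      by (simp add: matrix_mult_simps trace_simps trace_mult_transpose algebra_simps)
    ultimately show "integral Q (\<lambda>p. trace ((square_bump p *\<^sub>R (R p + transpose (R p))) ** (\<phi> p *\<^sub>R E))) = 0"
      using orth by simp
  qed
  note vanish = this
  have interior: "R p + transpose (R p) = 0" if "p \<in> {0<..<1} \<times> {0<..<1}" for p
  proof -
    have "p \<in> Q" using that by (auto simp: Q_def)
    then have "square_bump p *\<^sub>R (R p + transpose (R p)) = 0" by (rule vanish[rule_format])
    then show ?thesis using square_bump_pos[OF that] by simp
  qed
  have "continuous_on (closure ({0<..<1} \<times> {0<..<1})) (\<lambda>p. R p + transpose (R p))"
    unfolding Q_eq_closure_open_square[symmetric] by (intro continuous_intros cont)
  from continuous_constant_on_closure[OF this interior] show ?thesis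
    unfolding Q_eq_closure_open_square by blast
qed

lemma fundamental_lemma_C1:
  fixes R :: "real \<times> real \<Rightarrow> real^'n^'n"
  assumes "continuous_on Q R"
  shows "(\<forall>D. C1 D \<longrightarrow> integral Q (\<lambda>p. trace (R p ** D p)) = 0) \<longleftrightarrow> (\<forall>p\<in>Q. R p = 0)"
proof
  assume "\<forall>D. C1 D \<longrightarrow> integral Q (\<lambda>p. trace (R p ** D p)) = 0"
  then show "\<forall>p\<in>Q. R p = 0"
    by (intro continuous_matrix_orthogonal_polynomials_eq_0[OF assms]) (simp add: C1_polynomial_scaleR)
qed (auto simp: trace_simps intro!: integral_unique[OF has_integral_is_0])

lemma fundamental_lemma_C2:
  fixes R :: "real \<times> real \<Rightarrow> real^'n^'n"
  assumes "continuous_on Q R"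
  shows "(\<forall>D. C2 D \<longrightarrow> integral Q (\<lambda>p. trace (R p ** D p)) = 0) \<longleftrightarrow> (\<forall>p\<in>Q. R p = 0)"
proof
  assume "\<forall>D. C2 D \<longrightarrow> integral Q (\<lambda>p. trace (R p ** D p)) = 0"
  then show "\<forall>p\<in>Q. R p = 0"
    by (intro continuous_matrix_orthogonal_polynomials_eq_0[OF assms]) (simp add: C2_polynomial_scaleR)
qed (auto simp: trace_simps intro!: integral_unique[OF has_integral_is_0])

lemma fundamental_lemma_adm_Sigma_var:
  fixes R :: "real \<times> real \<Rightarrow> real^'n^'n"
  assumes "continuous_on Q R"
  shows "(\<forall>D. adm_Sigma_var D \<longrightarrow> integral Q (\<lambda>p. trace (R p ** D p)) = 0)
    \<longleftrightarrow> (\<forall>p\<in>Q. R p + transpose (R p) = 0)"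
proof
  assume orth: "\<forall>D. adm_Sigma_var D \<longrightarrow> integral Q (\<lambda>p. trace (R p ** D p)) = 0"
  show "\<forall>p\<in>Q. R p + transpose (R p) = 0"
  proof (rule continuous_matrix_orthogonal_symmetric_eq_0[OF assms])
    fix \<phi> :: "real \<times> real \<Rightarrow> real" and E :: "real^'n^'n"
    assume "real_polynomial_function \<phi>"
    then have "real_polynomial_function (\<lambda>p. square_bump p * \<phi> p)"
      using real_polynomial_function_square_bump by (rule real_polynomial_function.intros(4)[rotated])
    then have "adm_Sigma_var (\<lambda>p. (square_bump p * \<phi> p) *\<^sub>R (E + transpose E))"
      unfolding adm_Sigma_var_def symmetric_def
      by (auto simp: C2_polynomial_scaleR square_bump_on_boundary transpose_simps add.commute)
    with orth show "integral Q (\<lambda>p. trace (R p ** ((square_bump p * \<phi> p) *\<^sub>R (E + transpose E)))) = 0"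
      by blast
  qed
next
  assume skew: "\<forall>p\<in>Q. R p + transpose (R p) = 0"
  show "\<forall>D. adm_Sigma_var D \<longrightarrow> integral Q (\<lambda>p. trace (R p ** D p)) = 0"
  proof (intro allI impI)
    fix D :: "real \<times> real \<Rightarrow> real^'n^'n"
    assume "adm_Sigma_var D"
    then have "transpose (D p) = D p" if "p \<in> Q" for p
      using that by (simp add: adm_Sigma_var_def symmetric_def)
    with skew show "integral Q (\<lambda>p. trace (R p ** D p)) = 0"
      by (intro integral_unique[OF has_integral_is_0]) (simp add: trace_skew_mult_symmetric)
  qed
qed

section \<open>Integration by parts\<close>

lemma integral_pd_s_eq_0:
  fixes f g :: "real \<times> real \<Rightarrow> real"
  assumes cont: "continuous_on Q g"
    and deriv: "\<And>p. p \<in> Q \<Longrightarrow> ((\<lambda>s. f (s, snd p)) has_vector_derivative g p) (at (fst p) within {0..1})"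
    and left: "\<And>t. t \<in> {0..1} \<Longrightarrow> f (0, t) = 0" and right: "\<And>t. t \<in> {0..1} \<Longrightarrow> f (1, t) = 0"
  shows "integral Q g = 0"
proof -
  have inner: "integral {0..1} (\<lambda>s. g (s, t)) = 0" if "t \<in> {0..1}" for t
  proof -
    have "((\<lambda>s. g (s, t)) has_integral f (1, t) - f (0, t)) {0..1}"
      by (rule fundamental_theorem_of_calculus) (use deriv that in \<open>auto simp: mem_Q_iff\<close>)
    then show ?thesis using left[OF that] right[OF that] by (simp add: integral_unique)
  qed
  have "integral Q g = integral (cbox 0 1) (\<lambda>s. integral (cbox 0 1) (\<lambda>t. g (s, t)))"
    unfolding Q_eq_cbox by (rule integral_prod_continuous) (use cont in \<open>simp add: Q_eq_cbox\<close>)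
  also have "\<dots> = integral (cbox 0 1) (\<lambda>t. integral (cbox 0 1) (\<lambda>s. g (s, t)))"
    by (rule integral_swap_continuous) (use cont in \<open>simp add: Q_eq_cbox case_prod_beta'\<close>)
  also have "\<dots> = 0"
    by (rule integral_unique[OF has_integral_is_0]) (use inner in auto)
  finally show ?thesis .
qed

lemma integral_pd_t_eq_0:
  fixes f g :: "real \<times> real \<Rightarrow> real"
  assumes cont: "continuous_on Q g"
    and deriv: "\<And>p. p \<in> Q \<Longrightarrow> ((\<lambda>t. f (fst p, t)) has_vector_derivative g p) (at (snd p) within {0..1})"
    and bottom: "\<And>s. s \<in> {0..1} \<Longrightarrow> f (s, 0) = 0" and top: "\<And>s. s \<in> {0..1} \<Longrightarrow> f (s, 1) = 0"
  shows "integral Q g = 0"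
proof -
  have inner: "integral {0..1} (\<lambda>t. g (s, t)) = 0" if "s \<in> {0..1}" for s
  proof -
    have "((\<lambda>t. g (s, t)) has_integral f (s, 1) - f (s, 0)) {0..1}"
      by (rule fundamental_theorem_of_calculus) (use deriv that in \<open>auto simp: mem_Q_iff\<close>)
    then show ?thesis using bottom[OF that] top[OF that] by (simp add: integral_unique)
  qed
  have "integral Q g = integral (cbox 0 1) (\<lambda>s. integral (cbox 0 1) (\<lambda>t. g (s, t)))"
    unfolding Q_eq_cbox by (rule integral_prod_continuous) (use cont in \<open>simp add: Q_eq_cbox\<close>)
  also have "\<dots> = 0"
    by (rule integral_unique[OF has_integral_is_0]) (use inner in auto)
  finally show ?thesis .
qed

lemma integration_by_parts_pd_s:
  fixes S D :: "real \<times> real \<Rightarrow> real^'n^'n"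
  assumes S: "C1 S" and D: "C1 D" and boundary: "\<And>p. p \<in> Q \<Longrightarrow> on_boundary p \<Longrightarrow> D p = 0"
  shows "integral Q (\<lambda>p. trace (S p ** pd_s D p)) = - integral Q (\<lambda>p. trace (pd_s S p ** D p))"
proof -
  note cont = C1_D[OF S] C1_D[OF D]
  have "integral Q (\<lambda>p. trace (pd_s S p ** D p) + trace (S p ** pd_s D p)) = 0"
  proof (rule integral_pd_s_eq_0[where f = "\<lambda>p. trace (S p ** D p)"])
    show "continuous_on Q (\<lambda>p. trace (pd_s S p ** D p) + trace (S p ** pd_s D p))"
      by (intro continuous_intros cont)
    fix p assume "p \<in> Q"
    show "((\<lambda>s. trace (S (s, snd p) ** D (s, snd p))) has_vector_derivative
        trace (pd_s S p ** D p) + trace (S p ** pd_s D p)) (at (fst p) within {0..1})"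
      using has_vector_derivative_trace[OF has_vector_derivative_matrix_mult[OF
          has_vector_derivative_pd_s[OF S \<open>p \<in> Q\<close>] has_vector_derivative_pd_s[OF D \<open>p \<in> Q\<close>]]]
      by (simp add: trace_simps)
  qed (auto simp: boundary on_boundary_def mem_Q_iff trace_simps)
  moreover have "integral Q (\<lambda>p. trace (pd_s S p ** D p) + trace (S p ** pd_s D p))
      = integral Q (\<lambda>p. trace (pd_s S p ** D p)) + integral Q (\<lambda>p. trace (S p ** pd_s D p))"
    by (intro integral_add integrable_on_Q continuous_intros cont)
  ultimately show ?thesis by simp
qed

lemma integration_by_parts_pd_t:
  fixes S D :: "real \<times> real \<Rightarrow> real^'n^'n"
  assumes S: "C1 S" and D: "C1 D" and boundary: "\<And>p. p \<in> Q \<Longrightarrow> on_boundary p \<Longrightarrow> D p = 0"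
  shows "integral Q (\<lambda>p. trace (S p ** pd_t D p)) = - integral Q (\<lambda>p. trace (pd_t S p ** D p))"
proof -
  note cont = C1_D[OF S] C1_D[OF D]
  have "integral Q (\<lambda>p. trace (pd_t S p ** D p) + trace (S p ** pd_t D p)) = 0"
  proof (rule integral_pd_t_eq_0[where f = "\<lambda>p. trace (S p ** D p)"])
    show "continuous_on Q (\<lambda>p. trace (pd_t S p ** D p) + trace (S p ** pd_t D p))"
      by (intro continuous_intros cont)
    fix p assume "p \<in> Q"
    show "((\<lambda>t. trace (S (fst p, t) ** D (fst p, t))) has_vector_derivative
        trace (pd_t S p ** D p) + trace (S p ** pd_t D p)) (at (snd p) within {0..1})"
      using has_vector_derivative_trace[OF has_vector_derivative_matrix_mult[OF
          has_vector_derivative_pd_t[OF S \<open>p \<in> Q\<close>] has_vector_derivative_pd_t[OF D \<open>p \<in> Q\<close>]]]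
      by (simp add: trace_simps)
  qed (auto simp: boundary on_boundary_def mem_Q_iff trace_simps)
  moreover have "integral Q (\<lambda>p. trace (pd_t S p ** D p) + trace (S p ** pd_t D p))
      = integral Q (\<lambda>p. trace (pd_t S p ** D p)) + integral Q (\<lambda>p. trace (S p ** pd_t D p))"
    by (intro integral_add integrable_on_Q continuous_intros cont)
  ultimately show ?thesis by simp
qed

section \<open>Differentiating the Lagrangian\<close>

definition constraint_residual :: "'n::finite rmat \<Rightarrow> 'n rmat \<Rightarrow> 'n rmat \<Rightarrow> 'n rmat" where
  "constraint_residual S a P = P - S ** transpose a - a ** S"

definition lag_density ::
    "'n::finite rmat \<Rightarrow> 'n rmat \<Rightarrow> 'n rmat \<Rightarrow> 'n rmat \<Rightarrow> 'n rmat \<Rightarrow> 'n rmat \<Rightarrow> 'n rmat \<Rightarrow> real" where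
  "lag_density S a b Ss St Ps Pt =
     Jf S a b + trace (Ss ** constraint_residual S a Ps) + trace (St ** constraint_residual S b Pt)"

lemma transpose_constraint_residual:
  "transpose S = S \<Longrightarrow> transpose P = P \<Longrightarrow>
   transpose (constraint_residual S a P) = constraint_residual S a P"
  by (simp add: constraint_residual_def transpose_simps matrix_transpose_mul)

lemma Lag_eq_integral_lag_density:
  "Lag Sg As At Ss St =
     integral Q (\<lambda>p. lag_density (Sg p) (As p) (At p) (Ss p) (St p) (pd_s Sg p) (pd_t Sg p))"
  by (simp add: Lag_def lag_density_def constraint_residual_def)

definition Jf_radicand_deriv ::
    "'n::finite rmat \<Rightarrow> 'n rmat \<Rightarrow> 'n rmat \<Rightarrow> 'n rmat \<Rightarrow> 'n rmat \<Rightarrow> 'n rmat \<Rightarrow> real" where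
  "Jf_radicand_deriv S a b S' a' b' =
     trace ((S' ** transpose a + S ** transpose a') ** a + S ** transpose a ** a') * trace (S ** transpose b ** b)
   + trace (S ** transpose a ** a) * trace ((S' ** transpose b + S ** transpose b') ** b + S ** transpose b ** b')
   - (1/2) * trace (S' ** (transpose a ** b + transpose b ** a)
       + S ** (transpose a' ** b + transpose a ** b' + (transpose b' ** a + transpose b ** a')))
     * trace (S ** (transpose a ** b + transpose b ** a))"

definition lag_density_deriv ::
    "'n::finite rmat \<Rightarrow> 'n rmat \<Rightarrow> 'n rmat \<Rightarrow> 'n rmat \<Rightarrow> 'n rmat \<Rightarrow> 'n rmat \<Rightarrow> 'n rmat \<Rightarrow>
     'n rmat \<Rightarrow> 'n rmat \<Rightarrow> 'n rmat \<Rightarrow> 'n rmat \<Rightarrow> 'n rmat \<Rightarrow> 'n rmat \<Rightarrow> 'n rmat \<Rightarrow> real" where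
  "lag_density_deriv S a b Ss St Ps Pt S' a' b' Ss' St' Ps' Pt' =
     inverse (Jf S a b) / 2 * Jf_radicand_deriv S a b S' a' b'
   + trace (Ss' ** constraint_residual S a Ps
       + Ss ** (Ps' - (S' ** transpose a + S ** transpose a') - (a' ** S + a ** S')))
   + trace (St' ** constraint_residual S b Pt
       + St ** (Pt' - (S' ** transpose b + S ** transpose b') - (b' ** S + b ** S')))"

lemma has_real_derivative_lag_density:
  fixes S S' a a' b b' Ss Ss' St St' Ps Ps' Pt Pt' :: "'n::finite rmat"
  assumes pos: "Jf (S + x *\<^sub>R S') (a + x *\<^sub>R a') (b + x *\<^sub>R b') > 0"
  shows "((\<lambda>e. lag_density (S + e *\<^sub>R S') (a + e *\<^sub>R a') (b + e *\<^sub>R b') (Ss + e *\<^sub>R Ss')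
      (St + e *\<^sub>R St') (Ps + e *\<^sub>R Ps') (Pt + e *\<^sub>R Pt')) has_real_derivative
    lag_density_deriv (S + x *\<^sub>R S') (a + x *\<^sub>R a') (b + x *\<^sub>R b') (Ss + x *\<^sub>R Ss')
      (St + x *\<^sub>R St') (Ps + x *\<^sub>R Ps') (Pt + x *\<^sub>R Pt') S' a' b' Ss' St' Ps' Pt') (at x within U)"
proof -
  have line: "((\<lambda>e. X + e *\<^sub>R X') has_vector_derivative X') (at x within U)" for X X' :: "'n rmat"
    by (auto intro!: derivative_eq_intros)
  note dS = line[of S S'] and da = line[of a a'] and db = line[of b b'] and dSs = line[of Ss Ss']
    and dSt = line[of St St'] and dPs = line[of Ps Ps'] and dPt = line[of Pt Pt']
  note mult = has_vector_derivative_matrix_mult and tr = has_vector_derivative_trace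
    and tp = has_vector_derivative_transpose
    and real = has_real_derivative_iff_has_vector_derivative[THEN iffD2]
  note Taa = real[OF tr[OF mult[OF mult[OF dS tp[OF da]] da]]]
  note Tbb = real[OF tr[OF mult[OF mult[OF dS tp[OF db]] db]]]
  note Tab = real[OF tr[OF mult[OF dS has_vector_derivative_add[OF mult[OF tp[OF da] db] mult[OF tp[OF db] da]]]]]
  note radicand = DERIV_diff[OF DERIV_mult[OF Taa Tbb] DERIV_power[OF DERIV_cmult[OF Tab, of "1/2"], of 2]]
  note Jf_deriv = DERIV_chain2[OF DERIV_real_sqrt radicand]
  note constraint_s = real[OF tr[OF mult[OF dSs has_vector_derivative_diff[OF
      has_vector_derivative_diff[OF dPs mult[OF dS tp[OF da]]] mult[OF da dS]]]]]
  note constraint_t = real[OF tr[OF mult[OF dSt has_vector_derivative_diff[OF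
      has_vector_derivative_diff[OF dPt mult[OF dS tp[OF db]]] mult[OF db dS]]]]]
  have "0 < trace ((S + x *\<^sub>R S') ** transpose (a + x *\<^sub>R a') ** (a + x *\<^sub>R a'))
      * trace ((S + x *\<^sub>R S') ** transpose (b + x *\<^sub>R b') ** (b + x *\<^sub>R b'))
      - ((1/2) * trace ((S + x *\<^sub>R S') ** (transpose (a + x *\<^sub>R a') ** (b + x *\<^sub>R b')
          + transpose (b + x *\<^sub>R b') ** (a + x *\<^sub>R a'))))\<^sup>2"
    using pos by (simp add: Jf_def)
  from DERIV_add[OF DERIV_add[OF Jf_deriv[OF this] constraint_s] constraint_t] show ?thesis
    unfolding lag_density_def lag_density_deriv_def Jf_radicand_deriv_def Jf_def constraint_residual_def
    by (simp add: algebra_simps)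
qed

lemma uniformly_positive_near_0:
  fixes g :: "real \<times> 'a::metric_space \<Rightarrow> real"
  assumes K: "compact K" and cont: "continuous_on ({-1..1} \<times> K) g"
    and pos: "\<And>p. p \<in> K \<Longrightarrow> g (0, p) > 0"
  obtains \<delta> where "\<delta> > 0" "\<And>e p. e \<in> {-\<delta>..\<delta>} \<Longrightarrow> p \<in> K \<Longrightarrow> g (e, p) > 0"
proof (cases "K = {}")
  case True
  then show ?thesis using that[of 1] by simp
next
  case False
  have "continuous_on K (\<lambda>p. g (0, p))"
    by (rule continuous_on_compose2[OF cont]) (auto intro: continuous_on_Pair continuous_on_const continuous_on_id)
  then obtain p0 where "p0 \<in> K" and p0_min: "\<And>p. p \<in> K \<Longrightarrow> g (0, p0) \<le> g (0, p)"
    using continuous_attains_inf[OF K False] by blast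
  define m where "m = g (0, p0)"
  have "m > 0" unfolding m_def using pos \<open>p0 \<in> K\<close> .
  have "uniformly_continuous_on ({-1..1} \<times> K) g"
    using compact_uniformly_continuous[OF cont] K by (simp add: compact_Times)
  then obtain d where "d > 0"
    and d: "\<And>z z'. z \<in> {-1..1} \<times> K \<Longrightarrow> z' \<in> {-1..1} \<times> K \<Longrightarrow> dist z' z < d \<Longrightarrow> dist (g z') (g z) < m"
    unfolding uniformly_continuous_on_def using \<open>m > 0\<close> by metis
  show ?thesis
  proof (rule that[of "min 1 (d / 2)"])
    show "min 1 (d / 2) > 0" using \<open>d > 0\<close> by simp
    fix e p
    assume e: "e \<in> {-min 1 (d / 2)..min 1 (d / 2)}" and p: "p \<in> K"
    have "\<bar>e\<bar> \<le> d / 2" using e min.cobounded2[of 1 "d / 2"] by (auto simp: abs_le_iff)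
    then have "dist (e, p) (0, p) < d" using \<open>d > 0\<close> by (simp add: dist_Pair_Pair dist_real_def)
    then have "dist (g (e, p)) (g (0, p)) < m" using d e p by auto
    moreover have "m \<le> g (0, p)" unfolding m_def using p0_min p .
    ultimately show "g (e, p) > 0" by (simp add: dist_real_def)
  qed
qed

lemma continuous_on_compose_snd:
  "continuous_on Q f \<Longrightarrow> continuous_on (U \<times> Q) (\<lambda>z. f (snd z))"
  by (rule continuous_on_compose2[of Q f]) (auto intro: continuous_on_snd continuous_on_id)

text \<open>Differentiation under the integral sign needs \<open>Jf > 0\<close> on a whole strip
  \<open>{-\<delta>..\<delta>} \<times> Q\<close> of perturbations, where the square root is smooth.\<close>

lemma has_real_derivative_integral_lag_density:
  fixes S S' a a' b b' Ss Ss' St St' Ps Ps' Pt Pt' :: "real \<times> real \<Rightarrow> 'n::finite rmat"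
  assumes cont: "continuous_on Q S" "continuous_on Q S'" "continuous_on Q a" "continuous_on Q a'"
      "continuous_on Q b" "continuous_on Q b'" "continuous_on Q Ss" "continuous_on Q Ss'"
      "continuous_on Q St" "continuous_on Q St'" "continuous_on Q Ps" "continuous_on Q Ps'"
      "continuous_on Q Pt" "continuous_on Q Pt'"
    and pos: "\<And>p. p \<in> Q \<Longrightarrow> Jf (S p) (a p) (b p) > 0"
  shows "((\<lambda>e. integral Q (\<lambda>p. lag_density (S p + e *\<^sub>R S' p) (a p + e *\<^sub>R a' p) (b p + e *\<^sub>R b' p)
      (Ss p + e *\<^sub>R Ss' p) (St p + e *\<^sub>R St' p) (Ps p + e *\<^sub>R Ps' p) (Pt p + e *\<^sub>R Pt' p)))
    has_real_derivative integral Q (\<lambda>p. lag_density_deriv (S p) (a p) (b p) (Ss p) (St p) (Ps p) (Pt p)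
      (S' p) (a' p) (b' p) (Ss' p) (St' p) (Ps' p) (Pt' p))) (at 0)"
proof -
  define F where "F = (\<lambda>e p. lag_density (S p + e *\<^sub>R S' p) (a p + e *\<^sub>R a' p) (b p + e *\<^sub>R b' p)
      (Ss p + e *\<^sub>R Ss' p) (St p + e *\<^sub>R St' p) (Ps p + e *\<^sub>R Ps' p) (Pt p + e *\<^sub>R Pt' p))"
  define F' where "F' = (\<lambda>e p. lag_density_deriv (S p + e *\<^sub>R S' p) (a p + e *\<^sub>R a' p) (b p + e *\<^sub>R b' p)
      (Ss p + e *\<^sub>R Ss' p) (St p + e *\<^sub>R St' p) (Ps p + e *\<^sub>R Ps' p) (Pt p + e *\<^sub>R Pt' p)
      (S' p) (a' p) (b' p) (Ss' p) (St' p) (Ps' p) (Pt' p))"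
  define J where "J = (\<lambda>z. Jf (S (snd z) + fst z *\<^sub>R S' (snd z)) (a (snd z) + fst z *\<^sub>R a' (snd z))
      (b (snd z) + fst z *\<^sub>R b' (snd z)))"
  note cont_snd = cont[THEN continuous_on_compose_snd]
  have cont_J: "continuous_on (U \<times> Q) J" for U
    unfolding J_def Jf_def by (intro continuous_intros cont_snd)
  obtain \<delta> where "\<delta> > 0" and J_pos: "\<And>e p. e \<in> {-\<delta>..\<delta>} \<Longrightarrow> p \<in> Q \<Longrightarrow> J (e, p) > 0"
    using uniformly_positive_near_0[OF compact_Q cont_J] pos by (auto simp: J_def)
  then have J_ne_0: "\<forall>z\<in>{-\<delta>..\<delta>} \<times> Q. J z \<noteq> 0"
    by force
  have "((\<lambda>e. integral (cbox (0, 0) (1, 1)) (F e)) has_field_derivative integral (cbox (0, 0) (1, 1)) (F' 0))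
      (at 0 within {-\<delta>..\<delta>})"
  proof (rule leibniz_rule_field_derivative)
    fix e p assume "e \<in> {-\<delta>..\<delta>}" and "p \<in> cbox (0::real, 0::real) (1, 1)"
    then have "J (e, p) > 0" using J_pos by (simp add: Q_eq_cbox)
    then show "((\<lambda>e. F e p) has_field_derivative F' e p) (at e within {-\<delta>..\<delta>})"
      unfolding F_def F'_def J_def by (simp add: has_real_derivative_lag_density)
  next
    show "F e integrable_on cbox (0, 0) (1, 1)" for e
      unfolding F_def lag_density_def Jf_def constraint_residual_def Q_eq_cbox[symmetric]
      by (intro integrable_on_Q continuous_intros cont)
  next
    have "continuous_on ({-\<delta>..\<delta>} \<times> Q) (\<lambda>z. F' (fst z) (snd z))"
      unfolding F'_def lag_density_deriv_def Jf_radicand_deriv_def constraint_residual_def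
      using J_ne_0[unfolded J_def]
      by (intro continuous_intros cont_snd cont_J[unfolded J_def]) auto
    then show "continuous_on ({-\<delta>..\<delta>} \<times> cbox (0, 0) (1, 1)) (\<lambda>(e, p). F' e p)"
      by (simp add: case_prod_beta' Q_eq_cbox)
  qed (use \<open>\<delta> > 0\<close> in auto)
  moreover have "at (0::real) within {-\<delta>..\<delta>} = at 0"
    by (rule at_within_interior) (use \<open>\<delta> > 0\<close> in auto)
  ultimately show ?thesis by (simp add: F_def F'_def Q_eq_cbox)
qed

section \<open>Pointwise Euler--Lagrange equations\<close>

lemma Jf_swap: "Jf S b a = Jf S a b"
  by (simp add: Jf_def mult.commute add.commute)

definition Jf_grad_A :: "'n::finite rmat \<Rightarrow> 'n rmat \<Rightarrow> 'n rmat \<Rightarrow> 'n rmat" where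
  "Jf_grad_A S a b = inverse (Jf S a b) *\<^sub>R (trace (S ** transpose b ** b) *\<^sub>R a
     - ((1/2) * trace (S ** (transpose a ** b + transpose b ** a))) *\<^sub>R b)"

definition Jf_grad_Sigma :: "'n::finite rmat \<Rightarrow> 'n rmat \<Rightarrow> 'n rmat \<Rightarrow> 'n rmat" where
  "Jf_grad_Sigma S a b = ((1/2) * inverse (Jf S a b)) *\<^sub>R
     (trace (S ** transpose b ** b) *\<^sub>R (transpose a ** a) + trace (S ** transpose a ** a) *\<^sub>R (transpose b ** b)
      - ((1/2) * trace (S ** (transpose a ** b + transpose b ** a))) *\<^sub>R (transpose a ** b + transpose b ** a))"

definition euler_lagrange_A :: "'n::finite rmat \<Rightarrow> 'n rmat \<Rightarrow> 'n rmat \<Rightarrow> 'n rmat \<Rightarrow> 'n rmat" where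
  "euler_lagrange_A S a b M = S ** (transpose (Jf_grad_A S a b) - 2 *\<^sub>R M)"

definition euler_lagrange_Sigma ::
    "'n::finite rmat \<Rightarrow> 'n rmat \<Rightarrow> 'n rmat \<Rightarrow> 'n rmat \<Rightarrow> 'n rmat \<Rightarrow> 'n rmat \<Rightarrow> 'n rmat \<Rightarrow> 'n rmat" where
  "euler_lagrange_Sigma S a b Ss St dSs dSt = Jf_grad_Sigma S a b
     - (transpose a ** Ss + Ss ** a) - (transpose b ** St + St ** b) - dSs - dSt"

lemma lag_density_deriv_swap:
  "lag_density_deriv S a b Ss St Ps Pt S' a' b' Ss' St' Ps' Pt'
     = lag_density_deriv S b a St Ss Pt Ps S' b' a' St' Ss' Pt' Ps'"
  by (simp add: lag_density_deriv_def Jf_radicand_deriv_def Jf_swap algebra_simps)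

lemma lag_density_deriv_Ss:
  "lag_density_deriv S a b Ss St Ps Pt 0 0 0 D 0 0 0 = trace (constraint_residual S a Ps ** D)"
proof -
  have "lag_density_deriv S a b Ss St Ps Pt 0 0 0 D 0 0 0 = trace (D ** constraint_residual S a Ps)"
    by (simp add: lag_density_deriv_def Jf_radicand_deriv_def matrix_mult_simps trace_simps transpose_simps)
  then show ?thesis by (simp add: trace_mul_sym[of D])
qed

lemma lag_density_deriv_St:
  "lag_density_deriv S a b Ss St Ps Pt 0 0 0 0 D 0 0 = trace (constraint_residual S b Pt ** D)"
  using lag_density_deriv_Ss[of S b a St Ss Pt Ps D] by (simp add: lag_density_deriv_swap)

lemma lag_density_deriv_As:
  fixes S a b Ss St Ps Pt D :: "'n::finite rmat"
  assumes S: "transpose S = S" and Ss: "transpose Ss = Ss"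
  shows "lag_density_deriv S a b Ss St Ps Pt 0 D 0 0 0 0 0 = trace (euler_lagrange_A S a b Ss ** D)"
proof -
  have trace_S_transpose: "trace (S ** transpose D ** X) = trace (S ** transpose X ** D)" for X
  proof -
    have "trace (S ** transpose D ** X) = trace (transpose (S ** transpose D ** X))"
      by (simp add: trace_transpose)
    also have "\<dots> = trace (transpose X ** D ** S)"
      using S by (simp add: matrix_transpose_mul matrix_mul_assoc)
    finally show ?thesis using trace_mult_rotate[of S "transpose X" D] by simp
  qed
  have "trace (Ss ** S ** transpose D) = trace (transpose (Ss ** S ** transpose D))"
    by (simp add: trace_transpose)
  also have "\<dots> = trace (D ** S ** Ss)"
    using S Ss by (simp add: matrix_transpose_mul matrix_mul_assoc)
  finally have "trace (Ss ** S ** transpose D) = trace (S ** Ss ** D)"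
    using trace_mult_rotate[of D S Ss] by simp
  then show ?thesis
    using trace_S_transpose[of a] trace_S_transpose[of b] trace_mult_rotate[of Ss D S]
      trace_mult_rotate[of D S Ss]
    by (simp add: lag_density_deriv_def Jf_radicand_deriv_def euler_lagrange_A_def Jf_grad_A_def
        matrix_mult_simps trace_simps transpose_simps matrix_mul_assoc algebra_simps)
qed

lemma lag_density_deriv_At:
  fixes S a b Ss St Ps Pt D :: "'n::finite rmat"
  assumes "transpose S = S" and "transpose St = St"
  shows "lag_density_deriv S a b Ss St Ps Pt 0 0 D 0 0 0 0 = trace (euler_lagrange_A S b a St ** D)"
  using lag_density_deriv_As[OF assms, of b a Ss Pt Ps D] by (simp add: lag_density_deriv_swap)

text \<open>A \<open>\<Sigma>\<close>-variation also moves \<open>pd_s \<Sigma>\<close> and \<open>pd_t \<Sigma>\<close>; the resulting terms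
  \<open>trace (Ss ** Ds)\<close> and \<open>trace (St ** Dt)\<close> are integrated by parts later.\<close>

lemma lag_density_deriv_Sigma:
  fixes S a b Ss St Ps Pt D Ds Dt :: "'n::finite rmat"
  shows "lag_density_deriv S a b Ss St Ps Pt D 0 0 0 0 Ds Dt =
    trace ((euler_lagrange_Sigma S a b Ss St 0 0) ** D) + trace (Ss ** Ds) + trace (St ** Dt)"
  using trace_mult_rotate[of D "transpose a" a] trace_mult_rotate[of D "transpose b" b]
    trace_mult_rotate[of D "transpose a" b] trace_mult_rotate[of D "transpose b" a]
    trace_mult_rotate[of "transpose a" Ss D] trace_mult_rotate[of "transpose b" St D]
  by (simp add: lag_density_deriv_def Jf_radicand_deriv_def euler_lagrange_Sigma_def Jf_grad_Sigma_def
      matrix_mult_simps trace_simps transpose_simps matrix_mul_assoc algebra_simps)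

lemma Jf_grad_A_swap:
  "Jf_grad_A S b a = inverse (Jf S a b) *\<^sub>R (trace (S ** transpose a ** a) *\<^sub>R b
     - ((1/2) * trace (S ** (transpose a ** b + transpose b ** a))) *\<^sub>R a)"
  by (simp add: Jf_grad_A_def Jf_swap add.commute)

lemma transpose_Jf_grad_Sigma: "transpose (Jf_grad_Sigma S a b) = Jf_grad_Sigma S a b"
  by (simp add: Jf_grad_Sigma_def transpose_simps matrix_transpose_mul add.commute)

lemma euler_lagrange_A_eq_0_iff:
  assumes "pos_def S" and "transpose M = M"
  shows "euler_lagrange_A S a b M = 0 \<longleftrightarrow> Jf_grad_A S a b = 2 *\<^sub>R M"
proof -
  have "euler_lagrange_A S a b M = 0 \<longleftrightarrow> transpose (Jf_grad_A S a b) - 2 *\<^sub>R M = 0"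
  proof
    assume "euler_lagrange_A S a b M = 0"
    then show "transpose (Jf_grad_A S a b) - 2 *\<^sub>R M = 0"
      using pos_def_matrix_mult_eq_0[OF assms(1)] unfolding euler_lagrange_A_def by blast
  qed (simp add: euler_lagrange_A_def)
  also have "\<dots> \<longleftrightarrow> transpose (transpose (Jf_grad_A S a b) - 2 *\<^sub>R M) = 0"
    by (rule transpose_eq_0_iff[symmetric])
  finally show ?thesis using assms(2) by (simp add: transpose_simps)
qed

lemma multiplier_terms_eq_Jf_grad_Sigma:
  fixes S a b Ss St :: "'n::finite rmat"
  assumes s: "Jf_grad_A S a b = 2 *\<^sub>R Ss" and t: "Jf_grad_A S b a = 2 *\<^sub>R St"
    and Ss: "transpose Ss = Ss" and St: "transpose St = St"
  shows "transpose a ** Ss + Ss ** a + (transpose b ** St + St ** b) = 2 *\<^sub>R Jf_grad_Sigma S a b"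
proof -
  define c where "c = inverse (Jf S a b)"
  define k where "k = (1/2) * trace (S ** (transpose a ** b + transpose b ** a))"
  have Ss_eq: "Ss = (c/2) *\<^sub>R (trace (S ** transpose b ** b) *\<^sub>R a - k *\<^sub>R b)"
    using arg_cong[OF s, of "scaleR (1/2)"] by (simp add: Jf_grad_A_def c_def k_def)
  have St_eq: "St = (c/2) *\<^sub>R (trace (S ** transpose a ** a) *\<^sub>R b - k *\<^sub>R a)"
    using arg_cong[OF t, of "scaleR (1/2)"] by (simp add: Jf_grad_A_swap c_def k_def)
  have "transpose a ** Ss + Ss ** a + (transpose b ** St + St ** b)
      = transpose a ** Ss + transpose Ss ** a + (transpose b ** St + transpose St ** b)"
    using Ss St by simp
  also have "\<dots> = 2 *\<^sub>R Jf_grad_Sigma S a b"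
    unfolding Ss_eq St_eq
    by (simp add: Jf_grad_Sigma_def c_def k_def matrix_mult_simps transpose_simps vec_eq_iff algebra_simps)
  finally show ?thesis .
qed

lemma euler_lagrange_iff:
  fixes S a b Ss St dSs dSt :: "'n::finite rmat"
  defines "R \<equiv> euler_lagrange_Sigma S a b Ss St dSs dSt"
  assumes S: "pos_def S" and Ss: "transpose Ss = Ss" and St: "transpose St = St"
    and dSs: "transpose dSs = dSs" and dSt: "transpose dSt = dSt"
  shows "euler_lagrange_A S a b Ss = 0 \<and> euler_lagrange_A S b a St = 0 \<and> R + transpose R = 0
    \<longleftrightarrow> Jf_grad_A S a b = 2 *\<^sub>R Ss \<and> Jf_grad_A S b a = 2 *\<^sub>R St \<and> dSs + dSt + Jf_grad_Sigma S a b = 0"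
proof -
  define Z where "Z = dSs + dSt + Jf_grad_Sigma S a b"
  have Z_sym: "transpose Z = Z"
    using dSs dSt by (simp add: Z_def transpose_simps transpose_Jf_grad_Sigma)
  have R_eq: "R = - Z" if "Jf_grad_A S a b = 2 *\<^sub>R Ss" "Jf_grad_A S b a = 2 *\<^sub>R St"
    using multiplier_terms_eq_Jf_grad_Sigma[OF that Ss St]
    by (simp add: R_def Z_def euler_lagrange_Sigma_def algebra_simps scaleR_2)
  note eq_0_iff = euler_lagrange_A_eq_0_iff[OF S Ss, of a b] euler_lagrange_A_eq_0_iff[OF S St, of b a]
  show ?thesis
    unfolding Z_def[symmetric]
  proof
    assume "euler_lagrange_A S a b Ss = 0 \<and> euler_lagrange_A S b a St = 0 \<and> R + transpose R = 0"
    then have s: "Jf_grad_A S a b = 2 *\<^sub>R Ss" and t: "Jf_grad_A S b a = 2 *\<^sub>R St"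
      and "R + transpose R = 0"
      using eq_0_iff by auto
    then have "- Z + - Z = 0" using R_eq[OF s t] Z_sym by (simp add: transpose_simps)
    then have "Z = 0" by (simp add: scaleR_2[symmetric])
    with s t show "Jf_grad_A S a b = 2 *\<^sub>R Ss \<and> Jf_grad_A S b a = 2 *\<^sub>R St \<and> Z = 0" by simp
  next
    assume "Jf_grad_A S a b = 2 *\<^sub>R Ss \<and> Jf_grad_A S b a = 2 *\<^sub>R St \<and> Z = 0"
    then show "euler_lagrange_A S a b Ss = 0 \<and> euler_lagrange_A S b a St = 0 \<and> R + transpose R = 0"
      using eq_0_iff R_eq by (simp add: transpose_simps)
  qed
qed

lemma cp_system_iff:
  "cp_system Sg As At Ss St \<longleftrightarrow> (\<forall>p\<in>Q.
     Jf_grad_A (Sg p) (As p) (At p) = 2 *\<^sub>R Ss p \<and> Jf_grad_A (Sg p) (At p) (As p) = 2 *\<^sub>R St p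
     \<and> pd_s Ss p + pd_t St p + Jf_grad_Sigma (Sg p) (As p) (At p) = 0
     \<and> constraint_residual (Sg p) (As p) (pd_s Sg p) = 0 \<and> constraint_residual (Sg p) (At p) (pd_t Sg p) = 0)"
  unfolding cp_system_def Let_def
  by (simp add: Jf_grad_A_def Jf_grad_Sigma_def constraint_residual_def diff_diff_eq Jf_swap add.commute)

section \<open>First variations\<close>

lemma has_real_derivative_0_iff:
  "(f has_real_derivative d) (at x) \<Longrightarrow> (f has_real_derivative 0) (at x) \<longleftrightarrow> d = 0"
  by (metis DERIV_unique)

locale lagrangian_fields =
  fixes Sg As At Ss St :: "real \<times> real \<Rightarrow> 'n::finite rmat"
  assumes C1_Sg: "C1 Sg" and cont_As: "continuous_on Q As" and cont_At: "continuous_on Q At"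
    and C1_Ss: "C1 Ss" and C1_St: "C1 St"
    and pos_def_Sg: "\<And>p. p \<in> Q \<Longrightarrow> pos_def (Sg p)"
    and Jf_pos: "\<And>p. p \<in> Q \<Longrightarrow> Jf (Sg p) (As p) (At p) > 0"
    and symmetric_Ss: "\<And>p. p \<in> Q \<Longrightarrow> transpose (Ss p) = Ss p"
    and symmetric_St: "\<And>p. p \<in> Q \<Longrightarrow> transpose (St p) = St p"
begin

lemma symmetric_Sg: "p \<in> Q \<Longrightarrow> transpose (Sg p) = Sg p"
  using pos_def_Sg by (simp add: pos_def_def)

lemmas cont_Sg = C1_D(1)[OF C1_Sg] and cont_pd_s_Sg = C1_D(2)[OF C1_Sg]
  and cont_pd_t_Sg = C1_D(3)[OF C1_Sg] and cont_Ss = C1_D(1)[OF C1_Ss] and cont_St = C1_D(1)[OF C1_St]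
  and cont_0 = continuous_on_const[of Q "0 :: 'n rmat"]

lemmas cont = cont_Sg cont_pd_s_Sg cont_pd_t_Sg cont_As cont_At C1_D[OF C1_Ss] C1_D[OF C1_St]

lemma continuous_on_inverse_Jf: "continuous_on Q (\<lambda>p. inverse (Jf (Sg p) (As p) (At p)))"
proof (rule continuous_on_inverse)
  show "continuous_on Q (\<lambda>p. Jf (Sg p) (As p) (At p))"
    unfolding Jf_def by (intro continuous_intros cont)
qed (use Jf_pos in force)

lemma continuous_on_euler_lagrange_A:
  "continuous_on Q (\<lambda>p. euler_lagrange_A (Sg p) (As p) (At p) (Ss p))"
  "continuous_on Q (\<lambda>p. euler_lagrange_A (Sg p) (At p) (As p) (St p))"
  unfolding euler_lagrange_A_def Jf_grad_A_def Jf_swap[of _ "At _"]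
  by (intro continuous_intros cont continuous_on_inverse_Jf)+

lemma continuous_on_euler_lagrange_Sigma:
  "continuous_on Q (\<lambda>p. euler_lagrange_Sigma (Sg p) (As p) (At p) (Ss p) (St p) (pd_s Ss p) (pd_t St p))"
  unfolding euler_lagrange_Sigma_def Jf_grad_Sigma_def
  by (intro continuous_intros cont continuous_on_inverse_Jf)

lemma continuous_on_constraint_residual:
  "continuous_on Q (\<lambda>p. constraint_residual (Sg p) (As p) (pd_s Sg p))"
  "continuous_on Q (\<lambda>p. constraint_residual (Sg p) (At p) (pd_t Sg p))"
  unfolding constraint_residual_def by (intro continuous_intros cont)+

lemma has_real_derivative_Lag_Ss:
  assumes "continuous_on Q D"
  shows "((\<lambda>e. Lag Sg As At (\<lambda>p. Ss p + e *\<^sub>R D p) St) has_real_derivative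
    integral Q (\<lambda>p. trace (constraint_residual (Sg p) (As p) (pd_s Sg p) ** D p))) (at 0)"
  using has_real_derivative_integral_lag_density[OF cont_Sg cont_0 cont_As cont_0
      cont_At cont_0 cont_Ss assms cont_St cont_0 cont_pd_s_Sg cont_0
      cont_pd_t_Sg cont_0 Jf_pos]
  by (simp add: Lag_eq_integral_lag_density lag_density_deriv_Ss)

lemma has_real_derivative_Lag_St:
  assumes "continuous_on Q D"
  shows "((\<lambda>e. Lag Sg As At Ss (\<lambda>p. St p + e *\<^sub>R D p)) has_real_derivative
    integral Q (\<lambda>p. trace (constraint_residual (Sg p) (At p) (pd_t Sg p) ** D p))) (at 0)"
  using has_real_derivative_integral_lag_density[OF cont_Sg cont_0 cont_As cont_0
      cont_At cont_0 cont_Ss cont_0 cont_St assms cont_pd_s_Sg cont_0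
      cont_pd_t_Sg cont_0 Jf_pos]
  by (simp add: Lag_eq_integral_lag_density lag_density_deriv_St)

lemma has_real_derivative_Lag_As:
  assumes "continuous_on Q D"
  shows "((\<lambda>e. Lag Sg (\<lambda>p. As p + e *\<^sub>R D p) At Ss St) has_real_derivative
    integral Q (\<lambda>p. trace (euler_lagrange_A (Sg p) (As p) (At p) (Ss p) ** D p))) (at 0)"
proof -
  have "integral Q (\<lambda>p. lag_density_deriv (Sg p) (As p) (At p) (Ss p) (St p) (pd_s Sg p) (pd_t Sg p)
      0 (D p) 0 0 0 0 0) = integral Q (\<lambda>p. trace (euler_lagrange_A (Sg p) (As p) (At p) (Ss p) ** D p))"
    by (rule integral_cong) (simp add: lag_density_deriv_As symmetric_Sg symmetric_Ss)
  with has_real_derivative_integral_lag_density[OF cont_Sg cont_0 cont_As assms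
      cont_At cont_0 cont_Ss cont_0 cont_St cont_0 cont_pd_s_Sg
      cont_0 cont_pd_t_Sg cont_0 Jf_pos]
  show ?thesis by (simp add: Lag_eq_integral_lag_density)
qed

lemma has_real_derivative_Lag_At:
  assumes "continuous_on Q D"
  shows "((\<lambda>e. Lag Sg As (\<lambda>p. At p + e *\<^sub>R D p) Ss St) has_real_derivative
    integral Q (\<lambda>p. trace (euler_lagrange_A (Sg p) (At p) (As p) (St p) ** D p))) (at 0)"
proof -
  have "integral Q (\<lambda>p. lag_density_deriv (Sg p) (As p) (At p) (Ss p) (St p) (pd_s Sg p) (pd_t Sg p)
      0 0 (D p) 0 0 0 0) = integral Q (\<lambda>p. trace (euler_lagrange_A (Sg p) (At p) (As p) (St p) ** D p))"
    by (rule integral_cong) (simp add: lag_density_deriv_At symmetric_Sg symmetric_St)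
  with has_real_derivative_integral_lag_density[OF cont_Sg cont_0 cont_As cont_0
      cont_At assms cont_Ss cont_0 cont_St cont_0 cont_pd_s_Sg
      cont_0 cont_pd_t_Sg cont_0 Jf_pos]
  show ?thesis by (simp add: Lag_eq_integral_lag_density)
qed

lemma has_real_derivative_Lag_Sigma:
  assumes D: "C1 D" and boundary: "\<And>p. p \<in> Q \<Longrightarrow> on_boundary p \<Longrightarrow> D p = 0"
  shows "((\<lambda>e. Lag (\<lambda>p. Sg p + e *\<^sub>R D p) As At Ss St) has_real_derivative integral Q (\<lambda>p.
    trace (euler_lagrange_Sigma (Sg p) (As p) (At p) (Ss p) (St p) (pd_s Ss p) (pd_t St p) ** D p))) (at 0)"
proof -
  note contD = C1_D[OF D]
  define K where "K p = euler_lagrange_Sigma (Sg p) (As p) (At p) (Ss p) (St p) 0 0" for p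
  have contK: "continuous_on Q K"
    unfolding K_def euler_lagrange_Sigma_def Jf_grad_Sigma_def
    by (intro continuous_intros cont continuous_on_inverse_Jf)
  have int: "(\<lambda>p. trace (K p ** D p)) integrable_on Q" "(\<lambda>p. trace (Ss p ** pd_s D p)) integrable_on Q"
    "(\<lambda>p. trace (St p ** pd_t D p)) integrable_on Q" "(\<lambda>p. trace (pd_s Ss p ** D p)) integrable_on Q"
    "(\<lambda>p. trace (pd_t St p ** D p)) integrable_on Q"
    by (intro integrable_on_Q continuous_intros contK contD cont)+
  have Lag_eq: "Lag (\<lambda>p. Sg p + e *\<^sub>R D p) As At Ss St = integral Q (\<lambda>p. lag_density (Sg p + e *\<^sub>R D p)
      (As p) (At p) (Ss p) (St p) (pd_s Sg p + e *\<^sub>R pd_s D p) (pd_t Sg p + e *\<^sub>R pd_t D p))" for e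
    unfolding Lag_eq_integral_lag_density
    by (rule integral_cong) (simp add: pd_s_add_scaleR pd_t_add_scaleR C1_Sg D)
  have "integral Q (\<lambda>p. lag_density_deriv (Sg p) (As p) (At p) (Ss p) (St p) (pd_s Sg p) (pd_t Sg p)
      (D p) 0 0 0 0 (pd_s D p) (pd_t D p))
    = integral Q (\<lambda>p. trace (K p ** D p) + trace (Ss p ** pd_s D p) + trace (St p ** pd_t D p))"
    by (simp add: lag_density_deriv_Sigma K_def)
  also have "\<dots> = integral Q (\<lambda>p. trace (K p ** D p)) + integral Q (\<lambda>p. trace (Ss p ** pd_s D p))
      + integral Q (\<lambda>p. trace (St p ** pd_t D p))"
    using int by (simp add: integral_add integrable_add)
  also have "\<dots> = integral Q (\<lambda>p. trace (K p ** D p)) - integral Q (\<lambda>p. trace (pd_s Ss p ** D p))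
      - integral Q (\<lambda>p. trace (pd_t St p ** D p))"
    using integration_by_parts_pd_s[OF C1_Ss D boundary] integration_by_parts_pd_t[OF C1_St D boundary]
    by simp
  also have "\<dots> = integral Q (\<lambda>p. trace ((K p - pd_s Ss p - pd_t St p) ** D p))"
    using int by (simp add: integral_diff integrable_diff matrix_mult_simps trace_simps)
  also have "\<dots> = integral Q (\<lambda>p.
      trace (euler_lagrange_Sigma (Sg p) (As p) (At p) (Ss p) (St p) (pd_s Ss p) (pd_t St p) ** D p))"
    by (simp add: K_def euler_lagrange_Sigma_def)
  finally show ?thesis
    using has_real_derivative_integral_lag_density[OF cont_Sg contD(1) cont_As cont_0 cont_At cont_0
        cont_Ss cont_0 cont_St cont_0 cont_pd_s_Sg contD(2) cont_pd_t_Sg contD(3) Jf_pos]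
    by (simp add: Lag_eq)
qed

lemma critical_iff_euler_lagrange:
  "critical Sg As At Ss St \<longleftrightarrow> (\<forall>p\<in>Q.
     constraint_residual (Sg p) (As p) (pd_s Sg p) = 0 \<and> constraint_residual (Sg p) (At p) (pd_t Sg p) = 0
     \<and> euler_lagrange_A (Sg p) (As p) (At p) (Ss p) = 0 \<and> euler_lagrange_A (Sg p) (At p) (As p) (St p) = 0
     \<and> (let R = euler_lagrange_Sigma (Sg p) (As p) (At p) (Ss p) (St p) (pd_s Ss p) (pd_t St p)
        in R + transpose R = 0))"
proof -
  have Sigma: "(\<forall>D. adm_Sigma_var D \<longrightarrow>
        ((\<lambda>e. Lag (\<lambda>p. Sg p + e *\<^sub>R D p) As At Ss St) has_real_derivative 0) (at 0))
    \<longleftrightarrow> (\<forall>p\<in>Q. let R = euler_lagrange_Sigma (Sg p) (As p) (At p) (Ss p) (St p) (pd_s Ss p) (pd_t St p)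
        in R + transpose R = 0)"
    using fundamental_lemma_adm_Sigma_var[OF continuous_on_euler_lagrange_Sigma]
      has_real_derivative_0_iff[OF has_real_derivative_Lag_Sigma]
    by (simp add: adm_Sigma_var_def C2_imp_C1 Let_def)
  have A_s: "(\<forall>D. C2 D \<longrightarrow> ((\<lambda>e. Lag Sg (\<lambda>p. As p + e *\<^sub>R D p) At Ss St) has_real_derivative 0) (at 0))
    \<longleftrightarrow> (\<forall>p\<in>Q. euler_lagrange_A (Sg p) (As p) (At p) (Ss p) = 0)"
    using fundamental_lemma_C2[OF continuous_on_euler_lagrange_A(1)]
      has_real_derivative_0_iff[OF has_real_derivative_Lag_As[OF C1_D(1)[OF C2_imp_C1]]]
    by simp
  have A_t: "(\<forall>D. C2 D \<longrightarrow> ((\<lambda>e. Lag Sg As (\<lambda>p. At p + e *\<^sub>R D p) Ss St) has_real_derivative 0) (at 0))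
    \<longleftrightarrow> (\<forall>p\<in>Q. euler_lagrange_A (Sg p) (At p) (As p) (St p) = 0)"
    using fundamental_lemma_C2[OF continuous_on_euler_lagrange_A(2)]
      has_real_derivative_0_iff[OF has_real_derivative_Lag_At[OF C1_D(1)[OF C2_imp_C1]]]
    by simp
  have S_s: "(\<forall>D. C1 D \<longrightarrow> ((\<lambda>e. Lag Sg As At (\<lambda>p. Ss p + e *\<^sub>R D p) St) has_real_derivative 0) (at 0))
    \<longleftrightarrow> (\<forall>p\<in>Q. constraint_residual (Sg p) (As p) (pd_s Sg p) = 0)"
    using fundamental_lemma_C1[OF continuous_on_constraint_residual(1)]
      has_real_derivative_0_iff[OF has_real_derivative_Lag_Ss[OF C1_D(1)]]
    by simp
  have S_t: "(\<forall>D. C1 D \<longrightarrow> ((\<lambda>e. Lag Sg As At Ss (\<lambda>p. St p + e *\<^sub>R D p)) has_real_derivative 0) (at 0))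
    \<longleftrightarrow> (\<forall>p\<in>Q. constraint_residual (Sg p) (At p) (pd_t Sg p) = 0)"
    using fundamental_lemma_C1[OF continuous_on_constraint_residual(2)]
      has_real_derivative_0_iff[OF has_real_derivative_Lag_St[OF C1_D(1)]]
    by simp
  show ?thesis
    unfolding critical_def Sigma A_s A_t S_s S_t by blast
qed

theorem critical_iff_cp_system: "critical Sg As At Ss St \<longleftrightarrow> cp_system Sg As At Ss St"
proof -
  have "(euler_lagrange_A (Sg p) (As p) (At p) (Ss p) = 0 \<and> euler_lagrange_A (Sg p) (At p) (As p) (St p) = 0
      \<and> (let R = euler_lagrange_Sigma (Sg p) (As p) (At p) (Ss p) (St p) (pd_s Ss p) (pd_t St p)
         in R + transpose R = 0))
    \<longleftrightarrow> Jf_grad_A (Sg p) (As p) (At p) = 2 *\<^sub>R Ss p \<and> Jf_grad_A (Sg p) (At p) (As p) = 2 *\<^sub>R St p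
      \<and> pd_s Ss p + pd_t St p + Jf_grad_Sigma (Sg p) (As p) (At p) = 0" if "p \<in> Q" for p
    using euler_lagrange_iff[OF pos_def_Sg symmetric_Ss symmetric_St
        transpose_pd_s[OF C1_Ss symmetric_Ss] transpose_pd_t[OF C1_St symmetric_St]] that
    by (simp add: Let_def)
  then show ?thesis
    unfolding critical_iff_euler_lagrange cp_system_iff by blast
qed

end

section \<open>Symmetrising the multipliers\<close>

lemma Lag_symm_part:
  fixes Sg As At Ss St :: "real \<times> real \<Rightarrow> 'n::finite rmat"
  assumes Sg: "C1 Sg" and sym: "\<And>p. p \<in> Q \<Longrightarrow> transpose (Sg p) = Sg p"
  shows "Lag Sg As At Ss St = Lag Sg As At (symm_part Ss) (symm_part St)"
  unfolding Lag_eq_integral_lag_density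
  by (intro integral_cong) (simp add: lag_density_def symm_part_def trace_symm_part_mult
      transpose_constraint_residual transpose_pd_s transpose_pd_t Sg sym)

theorem mainTheorem7:
  fixes Sg As At Ss St :: "real \<times> real \<Rightarrow> real^'n::finite^'n"
  assumes "C2 Sg" and "C2 As" and "C2 At"
    and "\<forall>p\<in>Q. pos_def (Sg p)"
    and "\<forall>p\<in>Q. Jf (Sg p) (As p) (At p) > 0"
    and "C1 Ss" and "C1 St"
  shows "Lag Sg As At Ss St = Lag Sg As At (symm_part Ss) (symm_part St)
    \<and> ((\<forall>p\<in>Q. transpose (Ss p) = Ss p \<and> transpose (St p) = St p) \<longrightarrow>
        (critical Sg As At Ss St \<longleftrightarrow> cp_system Sg As At Ss St))"
proof -
  have Sg: "C1 Sg" using \<open>C2 Sg\<close> by (rule C2_imp_C1)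
  have "Lag Sg As At Ss St = Lag Sg As At (symm_part Ss) (symm_part St)"
    using Sg assms(4) by (intro Lag_symm_part) (auto simp: pos_def_def)
  moreover have "critical Sg As At Ss St \<longleftrightarrow> cp_system Sg As At Ss St"
    if "\<forall>p\<in>Q. transpose (Ss p) = Ss p \<and> transpose (St p) = St p"
  proof -
    interpret lagrangian_fields Sg As At Ss St
      using assms that Sg by unfold_locales (auto dest: C2_imp_C1 C1_D)
    show ?thesis by (rule critical_iff_cp_system)
  qed
  ultimately show ?thesis by blast
qed

end
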